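(* The family $\bigcup_{p\in\mathbb Z} D_p$, where $D_p=\{D_{p,\tau}\}_{\tau=0}^{\beta(|p|)-1}$, is an orthonormal basis of $L^2([0,1])$.
   Context: Define $\nu,\beta$ on $\mathbb N$ by $\nu(0)=0,\ \beta(0)=1$; $\nu(1)=1,\ \beta(1)=1$; and for $p\ge 2$, $\nu(p)=2^{p-1}+2^{p-2}$, $\beta(p)=2^{p-1}$. Set $\nu(-p)=-\nu(p)$ and $\beta(-p)=\beta(p)$. The DOST functions are: $D_{0,0}(t)=D_0(t)=1$; $D_{1,0}(t)=e^{2\pi i t}$; for $p\ge 2$ and $\tau=0,\dots,\beta(p)-1$, $$D_{p,\tau}(t)=\frac{1}{\sqrt{\beta(p)}}\sum_{f=\nu(p)-\beta(p)/2}^{\nu(p)+\beta(p)/2-1} e^{2\pi i f t}\,e^{-2\pi i f\tau/\beta(p)}=\frac{1}{\sqrt{\beta(p)}}\sum_{j=0}^{\beta(p)-1}e^{2\pi i(\beta(p)+j)(t-\tau/\beta(p))};$$ and for negative integers $p$, $D_{p,\tau}=\overline{D_{-p,\tau}}$, $\tau=0,\dots,\beta(|p|)-1$. Here $L^2([0,1])$ is the space of square-integrable 1-periodic functions with inner product $(f,g)=\int_0^1 f\bar g\,dt$. *)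

theory Defs
  imports "HOL-Analysis.Analysis"
begin

definition nu_nat :: "nat \<Rightarrow> int" where
  "nu_nat p = (if p = 0 then 0 else if p = 1 then 1 else 2^(p-1) + 2^(p-2))"

definition beta_nat :: "nat \<Rightarrow> nat" where
  "beta_nat p = (if p = 0 then 1 else if p = 1 then 1 else 2^(p-1))"

definition nu :: "int \<Rightarrow> int" where
  "nu p = (if p \<ge> 0 then nu_nat (nat p) else - nu_nat (nat (-p)))"

definition beta :: "int \<Rightarrow> nat" where
  "beta p = beta_nat (nat \<bar>p\<bar>)"

definition DOST_nat :: "nat \<Rightarrow> nat \<Rightarrow> real \<Rightarrow> complex" where
  "DOST_nat p \<tau> t =
    (if p = 0 then 1
     else if p = 1 then exp (2 * pi * \<i> * t)
     else (1 / sqrt (real (beta_nat p))) *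
       (\<Sum>f \<in> {nu_nat p - int (beta_nat p) div 2 .. nu_nat p + int (beta_nat p) div 2 - 1}.
          exp (2 * pi * \<i> * of_int f * t) *
          exp (- 2 * pi * \<i> * of_int f * of_nat \<tau> / of_nat (beta_nat p))))"

definition DOST :: "int \<Rightarrow> nat \<Rightarrow> real \<Rightarrow> complex" where
  "DOST p \<tau> t = (if p \<ge> 0 then DOST_nat (nat p) \<tau> t else cnj (DOST_nat (nat (-p)) \<tau> t))"

definition DOST_index :: "(int \<times> nat) set" where
  "DOST_index = {(p, \<tau>). \<tau> < beta p}"

abbreviation unit_interval_measure :: "real measure" where
  "unit_interval_measure \<equiv> lebesgue_on {0..1}"

definition L2_01 :: "(real \<Rightarrow> complex) set" where
  "L2_01 = {f. f \<in> borel_measurable unit_interval_measure \<and>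
               integrable unit_interval_measure (\<lambda>t. (norm (f t))^2)}"

definition L2_inner :: "(real \<Rightarrow> complex) \<Rightarrow> (real \<Rightarrow> complex) \<Rightarrow> complex" where
  "L2_inner f g = integral\<^sup>L unit_interval_measure (\<lambda>t. f t * cnj (g t))"

definition L2_orthonormal_basis :: "('i \<Rightarrow> real \<Rightarrow> complex) \<Rightarrow> 'i set \<Rightarrow> bool" where
  "L2_orthonormal_basis e I \<longleftrightarrow>
     (\<forall>i\<in>I. e i \<in> L2_01) \<and>
     (\<forall>i\<in>I. \<forall>j\<in>I. L2_inner (e i) (e j) = (if i = j then 1 else 0)) \<and>
     (\<forall>f\<in>L2_01. (\<forall>i\<in>I. L2_inner f (e i) = 0) \<longrightarrow>
        (AE t in unit_interval_measure. f t = 0))"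

end

theory Submission
  imports Defs "HOL-Library.Log_Nat"
begin

text \<open>On the band of index \<open>p\<close> the DOST functions are obtained from the exponentials
  \<open>exp (2 \<pi> i f t)\<close>, \<open>f\<close> in the band, through a unitary discrete Fourier matrix, and the bands
  are the sets of integers of fixed signed bit length, hence partition \<open>\<int>\<close>. Orthonormality
  therefore follows from Parseval's identity for trigonometric polynomials, and every exponential
  is a finite combination of DOST functions, which reduces completeness to that of the
  trigonometric system: a function orthogonal to all exponentials is orthogonal to every
  continuous function on the circle (Stone--Weierstrass), hence to the indicator of every
  subinterval of \<open>(0, 1)\<close> (dominated convergence), hence vanishes almost everywhere (Lebesgue
  differentiation).\<close>

definition exp_freq :: "int \<Rightarrow> real \<Rightarrow> complex" where
  "exp_freq n t = exp (2 * pi * \<i> * of_int n * of_real t)"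

lemma continuous_on_exp_freq [continuous_intros]: "continuous_on S (exp_freq n)"
  unfolding exp_freq_def by (intro continuous_intros)

lemma exp_freq_add: "exp_freq (m + n) t = exp_freq m t * exp_freq n t"
  unfolding exp_freq_def by (simp add: exp_add[symmetric] algebra_simps)

lemma cnj_exp_freq: "cnj (exp_freq n t) = exp_freq (- n) t"
  unfolding exp_freq_def by (simp add: exp_cnj)

lemma exp_freq_0 [simp]: "exp_freq 0 = (\<lambda>_. 1)"
  by (simp add: exp_freq_def fun_eq_iff)

lemma norm_exp_freq [simp]: "norm (exp_freq n t) = 1"
  unfolding exp_freq_def by (simp add: norm_exp_eq_Re)

lemma exp_two_pi_i_int [simp]: "exp (2 * of_real pi * \<i> * of_int k) = (1::complex)"
  by (simp add: exp_eq_1)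

lemma integral_exp_freq:
  "integral\<^sup>L (lebesgue_on {0..1}) (exp_freq n) = (if n = 0 then 1 else 0)"
proof (cases "n = 0")
  case False
  define c where "c = 2 * pi * \<i> * of_int n"
  have "c \<noteq> 0" using False by (simp add: c_def)
  have "integral\<^sup>L (lebesgue_on {0..1}) (exp_freq n) = integral {0..1} (exp_freq n)"
    by (intro lebesgue_integral_eq_integral continuous_imp_integrable_real continuous_on_exp_freq) auto
  also have "\<dots> = integral {0..1} (\<lambda>t. exp (c * complex_of_real t))"
    by (simp add: exp_freq_def[abs_def] c_def mult_ac)
  also have "\<dots> = (exp (c * of_real 1) - 1) / c"
    using \<open>c \<noteq> 0\<close> by (intro integral_exp) auto
  also have "\<dots> = 0"
    by (simp add: c_def)
  finally show ?thesis using False by simp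
qed (simp add: measure_restrict_space)

lemma sum_roots_of_unity:
  assumes "0 < b"
  shows "(\<Sum>j<b. exp (2 * pi * \<i> * of_int k * of_nat j / of_nat b)) =
         (if int b dvd k then of_nat b else (0::complex))"
proof -
  define z where "z = exp (2 * pi * \<i> * of_int k / of_nat b)"
  have powers: "exp (2 * pi * \<i> * of_int k * of_nat j / of_nat b) = z ^ j" for j :: nat
    unfolding z_def exp_of_nat_mult[symmetric] by (simp add: mult_ac)
  have "z ^ b = exp (2 * pi * \<i> * of_int k)"
    unfolding z_def exp_of_nat_mult[symmetric] using assms by (simp add: field_simps)
  then have "z ^ b = 1" by simp
  moreover have "z = 1 \<longleftrightarrow> int b dvd k"
  proof
    assume "z = 1"
    then obtain m :: int where "2 * pi * real_of_int k / real b = real_of_int (2 * m) * pi"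
      unfolding z_def exp_eq_1 by auto
    then have "real_of_int k = real_of_int (m * int b)" using assms by (simp add: field_simps)
    then show "int b dvd k" by (simp only: of_int_eq_iff) simp
  next
    assume "int b dvd k"
    then obtain m where "k = int b * m" by auto
    then show "z = 1" unfolding z_def using assms by (simp add: field_simps)
  qed
  ultimately show ?thesis
    unfolding powers by (auto simp: sum_gp_strict)
qed

lemma sum_roots_of_unity_small:
  assumes "\<bar>k\<bar> < int b"
  shows "(\<Sum>j<b. exp (2 * pi * \<i> * of_int k * of_nat j / of_nat b)) =
         (if k = 0 then of_nat b else (0::complex))"
proof -
  have "int b dvd k \<longleftrightarrow> k = 0"
    using assms dvd_imp_le_int[of k "int b"] by auto
  moreover have "0 < b"
    using assms by linarith
  ultimately show ?thesis
    unfolding sum_roots_of_unity[OF \<open>0 < b\<close>] by simp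
qed

definition dft_coeff :: "nat \<Rightarrow> nat \<Rightarrow> int \<Rightarrow> complex" where
  "dft_coeff b \<tau> f = exp (- 2 * pi * \<i> * of_int f * of_nat \<tau> / of_nat b) / sqrt (real b)"

lemma cnj_dft_coeff: "cnj (dft_coeff b \<tau> f) = dft_coeff b \<tau> (- f)"
  by (simp add: dft_coeff_def exp_cnj)

lemma dft_coeff_mult_cnj:
  assumes "0 < b"
  shows "dft_coeff b \<tau> f * cnj (dft_coeff b \<sigma> g) =
    exp (2 * pi * \<i> * of_int (g * int \<sigma> - f * int \<tau>) / of_nat b) / of_nat b"
proof -
  have "complex_of_real (sqrt (real b)) * complex_of_real (sqrt (real b)) = of_nat b"
    by (simp flip: of_real_mult)
  moreover have "- 2 * pi * \<i> * of_int f * of_nat \<tau> / of_nat b + 2 * pi * \<i> * of_int g * of_nat \<sigma> / of_nat b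
      = 2 * pi * \<i> * of_int (g * int \<sigma> - f * int \<tau>) / (of_nat b :: complex)"
    by (simp add: diff_divide_distrib algebra_simps)
  ultimately show ?thesis
    by (simp add: dft_coeff_def exp_cnj flip: exp_add)
qed

lemma sum_int_interval_shift: "(\<Sum>f\<in>{a..<a + int b}. g f) = (\<Sum>j<b. g (a + int j))"
  by (rule sum.reindex_bij_witness[of _ "\<lambda>j. a + int j" "\<lambda>f. nat (f - a)"]) auto

lemma dft_coeff_orthonormal:
  assumes "\<tau> < b" "\<sigma> < b"
  shows "(\<Sum>f\<in>{a..<a + int b}. dft_coeff b \<tau> f * cnj (dft_coeff b \<sigma> f)) =
    (if \<tau> = \<sigma> then 1 else 0)"
proof -
  define k where "k = int \<sigma> - int \<tau>"
  have "0 < b" "\<bar>k\<bar> < int b"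
    using assms by (auto simp: k_def)
  define c where "c = exp (2 * pi * \<i> * of_int (a * k) / of_nat b) / of_nat b"
  have "(\<Sum>f\<in>{a..<a + int b}. dft_coeff b \<tau> f * cnj (dft_coeff b \<sigma> f)) =
      (\<Sum>j<b. c * exp (2 * pi * \<i> * of_int k * of_nat j / of_nat b))"
    unfolding sum_int_interval_shift
  proof (rule sum.cong[OF refl])
    fix j
    have "2 * pi * \<i> * of_int ((a + int j) * int \<sigma> - (a + int j) * int \<tau>) / of_nat b =
        2 * pi * \<i> * of_int (a * k) / of_nat b + 2 * pi * \<i> * of_int k * of_nat j / (of_nat b :: complex)"
      using \<open>0 < b\<close> by (simp add: k_def field_simps)
    then show "dft_coeff b \<tau> (a + int j) * cnj (dft_coeff b \<sigma> (a + int j)) =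
        c * exp (2 * pi * \<i> * of_int k * of_nat j / of_nat b)"
      by (simp add: dft_coeff_mult_cnj[OF \<open>0 < b\<close>] c_def exp_add)
  qed
  also have "\<dots> = c * (if k = 0 then of_nat b else 0)"
    unfolding sum_distrib_left[symmetric] sum_roots_of_unity_small[OF \<open>\<bar>k\<bar> < int b\<close>] ..
  finally show ?thesis
    using \<open>0 < b\<close> by (auto simp: k_def c_def)
qed

lemma dft_coeff_inversion:
  assumes "f \<in> {a..<a + int b}" "g \<in> {a..<a + int b}"
  shows "(\<Sum>\<tau><b. dft_coeff b \<tau> f * cnj (dft_coeff b \<tau> g)) = (if f = g then 1 else 0)"
proof -
  have "0 < b" "\<bar>g - f\<bar> < int b"
    using assms by auto
  have "(\<Sum>\<tau><b. dft_coeff b \<tau> f * cnj (dft_coeff b \<tau> g)) =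
      (\<Sum>\<tau><b. exp (2 * pi * \<i> * of_int (g - f) * of_nat \<tau> / of_nat b)) / of_nat b"
    by (simp add: dft_coeff_mult_cnj[OF \<open>0 < b\<close>] sum_divide_distrib algebra_simps)
  also have "\<dots> = (if f = g then 1 else 0)"
    unfolding sum_roots_of_unity_small[OF \<open>\<bar>g - f\<bar> < int b\<close>] using \<open>0 < b\<close> by simp
  finally show ?thesis .
qed

text \<open>For \<open>p \<ge> 2\<close> this is the paper's band \<open>{\<nu>(p) - \<beta>(p)/2, \<dots>, \<nu>(p) + \<beta>(p)/2 - 1}\<close>,
  i.e. \<open>{2^(p-1), \<dots>, 2^p - 1}\<close>; for \<open>|p| \<le> 1\<close> it is \<open>{p}\<close>, and negative indices give the
  mirrored bands.\<close>

definition band :: "int \<Rightarrow> int set" where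
  "band p = {f. sgn f * bitlen \<bar>f\<bar> = p}"

lemma band_disjoint: "p \<noteq> q \<Longrightarrow> band p \<inter> band q = {}"
  by (auto simp: band_def)

lemma mem_band_signed_bitlen: "f \<in> band (sgn f * bitlen \<bar>f\<bar>)"
  by (simp add: band_def)

lemma mem_band_uminus: "f \<in> band (- p) \<longleftrightarrow> - f \<in> band p"
  unfolding band_def by (auto simp: sgn_minus)

lemma band_of_nat: "band (int q) = {2 ^ q div 2 ..< 2 ^ q}"
proof (rule set_eqI)
  fix f :: int
  show "f \<in> band (int q) \<longleftrightarrow> f \<in> {2 ^ q div 2 ..< 2 ^ q}"
  proof (cases "0 < f")
    case True
    have "f \<in> band (int q) \<longleftrightarrow> int q \<le> bitlen f \<and> bitlen f \<le> int q"
      using True by (auto simp: band_def)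
    also have "\<dots> \<longleftrightarrow> (q = 0 \<or> 2 ^ (q - 1) \<le> f) \<and> f < 2 ^ q"
      by (simp add: bitlen_le_iff_power bitlen_ge_iff_power)
    also have "\<dots> \<longleftrightarrow> f \<in> {2 ^ q div 2 ..< 2 ^ q}"
      using True by (cases q) auto
    finally show ?thesis .
  next
    case False
    have "0 < bitlen (- f)" if "f < 0"
      using that bitlen_nonneg[of "- f"] bitlen_eq_zero_iff[of "- f"] by linarith
    then have "f \<in> band (int q) \<longleftrightarrow> f = 0 \<and> q = 0"
      using False by (auto simp: band_def sgn_if)
    moreover have "(0::int) < 2 ^ q div 2" if "q \<noteq> 0"
      using that by (cases q) auto
    ultimately show ?thesis
      using False by force
  qed
qed

lemma band_0: "band 0 = {0}"
  by (auto simp: band_def bitlen_eq_zero_iff sgn_0_0)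

lemma band_1: "band 1 = {1}"
proof -
  have "{1..<2::int} = {1}"
    by auto
  then show ?thesis
    using band_of_nat[of 1] by simp
qed

lemma beta_nat_eq: "int (beta_nat q) = 2 ^ q - 2 ^ q div 2"
  by (cases q) (auto simp: beta_nat_def)

lemma band_is_interval: "\<exists>a. band p = {a..<a + int (beta p)}"
proof (cases "0 \<le> p")
  case True
  then have "band p = {2 ^ nat p div 2 ..< 2 ^ nat p div 2 + int (beta p)}"
    using band_of_nat[of "nat p"] by (simp add: beta_def beta_nat_eq)
  then show ?thesis ..
next
  case False
  define q where "q = nat (- p)"
  have p: "p = - int q"
    using False by (simp add: q_def)
  have "band p = {1 - 2 ^ q ..< 1 - 2 ^ q div 2}"
  proof (rule set_eqI)
    fix f
    have "f \<in> band p \<longleftrightarrow> - f \<in> band (int q)"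
      by (simp add: p mem_band_uminus)
    then show "f \<in> band p \<longleftrightarrow> f \<in> {1 - 2 ^ q ..< 1 - 2 ^ q div 2}"
      by (auto simp: band_of_nat)
  qed
  also have "\<dots> = {1 - 2 ^ q ..< 1 - 2 ^ q + int (beta p)}"
    by (simp add: p beta_def beta_nat_eq)
  finally show ?thesis ..
qed

lemma finite_band [simp]: "finite (band p)"
  using band_is_interval[of p] by auto

lemma DOST_nat_eq_sum:
  "DOST_nat q \<tau> t = (\<Sum>f\<in>band (int q). dft_coeff (beta_nat q) \<tau> f * exp_freq f t)"
proof -
  consider "q = 0" | "q = 1" | "2 \<le> q"
    by force
  then show ?thesis
  proof cases
    case 1
    then show ?thesis
      by (simp add: DOST_nat_def beta_nat_def dft_coeff_def band_0)
  next
    case 2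
    have "exp (- (2 * pi * \<i> * of_nat \<tau>)) = 1"
      using exp_two_pi_i_int[of "- int \<tau>"] by simp
    then show ?thesis
      using 2 by (simp add: DOST_nat_def beta_nat_def dft_coeff_def exp_freq_def band_1)
  next
    case 3
    then obtain m where m: "q = Suc (Suc m)"
      by (metis add_2_eq_Suc le_Suc_ex)
    have "nu_nat q - int (beta_nat q) div 2 = 2 ^ q div 2"
      "nu_nat q + int (beta_nat q) div 2 - 1 + 1 = 2 ^ q"
      by (simp_all add: m beta_nat_def nu_nat_def)
    then have interval:
      "{nu_nat q - int (beta_nat q) div 2 .. nu_nat q + int (beta_nat q) div 2 - 1} = band (int q)"
      unfolding band_of_nat by (metis atLeastLessThanPlusOne_atLeastAtMost_int)
    show ?thesis
      unfolding interval[symmetric] using 3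
      by (simp add: DOST_nat_def dft_coeff_def exp_freq_def sum_distrib_left mult_ac)
  qed
qed

lemma DOST_eq_sum: "DOST p \<tau> t = (\<Sum>f\<in>band p. dft_coeff (beta p) \<tau> f * exp_freq f t)"
proof (cases "0 \<le> p")
  case True
  then show ?thesis
    by (simp add: DOST_def DOST_nat_eq_sum beta_def)
next
  case False
  define q where "q = nat (- p)"
  have p: "p = - int q"
    using False by (simp add: q_def)
  have "DOST p \<tau> t = (\<Sum>f\<in>band (int q). dft_coeff (beta p) \<tau> (- f) * exp_freq (- f) t)"
    using False by (simp add: DOST_def DOST_nat_eq_sum cnj_dft_coeff cnj_exp_freq p beta_def)
  also have "\<dots> = (\<Sum>f\<in>band p. dft_coeff (beta p) \<tau> f * exp_freq f t)"
    by (rule sum.reindex_bij_witness[of _ uminus uminus]) (auto simp: p mem_band_uminus)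
  finally show ?thesis .
qed

lemma exp_freq_eq_sum_DOST:
  assumes "n \<in> band p"
  shows "exp_freq n t = (\<Sum>\<tau><beta p. cnj (dft_coeff (beta p) \<tau> n) * DOST p \<tau> t)"
proof -
  obtain a where band: "band p = {a..<a + int (beta p)}"
    using band_is_interval by blast
  have "(\<Sum>\<tau><beta p. cnj (dft_coeff (beta p) \<tau> n) * DOST p \<tau> t) =
      (\<Sum>f\<in>band p. (\<Sum>\<tau><beta p. dft_coeff (beta p) \<tau> f * cnj (dft_coeff (beta p) \<tau> n)) * exp_freq f t)"
    by (simp add: DOST_eq_sum sum_distrib_left sum_distrib_right mult_ac sum.swap[of _ "{..<beta p}"])
  also have "\<dots> = (\<Sum>f\<in>band p. if f = n then exp_freq f t else 0)"
    using assms by (intro sum.cong refl) (simp add: band dft_coeff_inversion)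
  also have "\<dots> = exp_freq n t"
    using assms by simp
  finally show ?thesis ..
qed

lemma continuous_on_DOST [continuous_intros]: "continuous_on S (DOST p \<tau>)"
  unfolding DOST_eq_sum[abs_def] by (intro continuous_intros)

lemma L2_01_if_continuous: "continuous_on {0..1} g \<Longrightarrow> g \<in> L2_01"
  unfolding L2_01_def
  by (auto intro!: continuous_imp_measurable_on_sets_lebesgue continuous_imp_integrable_real continuous_intros)

lemma integrable_if_L2_01:
  assumes "f \<in> L2_01"
  shows "integrable unit_interval_measure f"
proof (rule Bochner_Integration.integrable_bound)
  show "integrable unit_interval_measure (\<lambda>t. 1 + (norm (f t))\<^sup>2)"
    using assms unfolding L2_01_def by (auto intro: continuous_imp_integrable_real)
  show "f \<in> borel_measurable unit_interval_measure"
    using assms by (simp add: L2_01_def)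
  have "norm (f t) \<le> 1 + (norm (f t))\<^sup>2" for t
  proof -
    have "0 \<le> (norm (f t) - 1)\<^sup>2 + norm (f t)"
      by simp
    then show ?thesis
      by (simp add: power2_eq_square algebra_simps)
  qed
  then show "AE t in unit_interval_measure. norm (f t) \<le> norm (1 + (norm (f t))\<^sup>2)"
    by simp
qed

lemma integrable_mult_continuous:
  fixes f g :: "real \<Rightarrow> complex"
  assumes f: "integrable unit_interval_measure f" and g: "continuous_on {0..1} g"
  shows "integrable unit_interval_measure (\<lambda>t. f t * g t)"
proof -
  obtain B where B: "\<forall>t\<in>{0..1}. norm (g t) \<le> B"
    using compact_imp_bounded[OF compact_continuous_image[OF g compact_Icc]]
    by (auto simp: bounded_iff)
  show ?thesis
  proof (rule Bochner_Integration.integrable_bound)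
    show "integrable unit_interval_measure (\<lambda>t. of_real B * f t)"
      using f by simp
    show "(\<lambda>t. f t * g t) \<in> borel_measurable unit_interval_measure"
      using f g by (intro borel_measurable_times borel_measurable_integrable
          continuous_imp_measurable_on_sets_lebesgue) auto
    show "AE t in unit_interval_measure. norm (f t * g t) \<le> norm (complex_of_real B * f t)"
    proof (rule AE_I2)
      fix t
      assume "t \<in> space unit_interval_measure"
      then have "norm (g t) \<le> B"
        using B by auto
      moreover have "0 \<le> B"
        using norm_ge_zero order_trans calculation by blast
      ultimately show "norm (f t * g t) \<le> norm (complex_of_real B * f t)"
        by (simp add: norm_mult mult.commute[of B] mult_left_mono)
    qed
  qed
qed

lemma L2_inner_exp_freq_sums:
  assumes "finite A" "finite B"
  shows "L2_inner (\<lambda>t. \<Sum>f\<in>A. a f * exp_freq f t) (\<lambda>t. \<Sum>g\<in>B. c g * exp_freq g t) =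
    (\<Sum>f\<in>A \<inter> B. a f * cnj (c f))"
proof -
  have "L2_inner (\<lambda>t. \<Sum>f\<in>A. a f * exp_freq f t) (\<lambda>t. \<Sum>g\<in>B. c g * exp_freq g t) =
      integral\<^sup>L unit_interval_measure (\<lambda>t. \<Sum>f\<in>A. \<Sum>g\<in>B. a f * cnj (c g) * exp_freq (f - g) t)"
    unfolding L2_inner_def
    by (intro Bochner_Integration.integral_cong refl)
      (simp add: sum_product cnj_exp_freq exp_freq_add[of _ "- _", simplified] mult_ac)
  also have "\<dots> = (\<Sum>f\<in>A. \<Sum>g\<in>B. a f * cnj (c g) * (if f = g then 1 else 0))"
    by (simp add: integral_exp_freq continuous_imp_integrable_real continuous_on_exp_freq)
  also have "\<dots> = (\<Sum>f\<in>A \<inter> B. a f * cnj (c f))"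
    using assms by (simp add: sum.inter_restrict if_distrib cong: if_cong)
  finally show ?thesis .
qed

lemma L2_inner_sum_right:
  assumes "integrable unit_interval_measure h" "\<And>i. i \<in> I \<Longrightarrow> continuous_on {0..1} (g i)"
  shows "L2_inner h (\<lambda>t. \<Sum>i\<in>I. d i * g i t) = (\<Sum>i\<in>I. cnj (d i) * L2_inner h (g i))"
proof -
  have "L2_inner h (\<lambda>t. \<Sum>i\<in>I. d i * g i t) =
      integral\<^sup>L unit_interval_measure (\<lambda>t. \<Sum>i\<in>I. cnj (d i) * (h t * cnj (g i t)))"
    unfolding L2_inner_def
    by (intro Bochner_Integration.integral_cong refl) (simp add: sum_distrib_left mult_ac)
  also have "\<dots> = (\<Sum>i\<in>I. cnj (d i) * L2_inner h (g i))"
    unfolding L2_inner_def using assms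
    by (subst Bochner_Integration.integral_sum)
      (auto intro!: integrable_mult_right integrable_mult_continuous continuous_on_cnj)
  finally show ?thesis .
qed

lemma L2_inner_DOST:
  assumes "\<tau> < beta p" "\<sigma> < beta q"
  shows "L2_inner (DOST p \<tau>) (DOST q \<sigma>) = (if p = q \<and> \<tau> = \<sigma> then 1 else 0)"
proof -
  have "L2_inner (DOST p \<tau>) (DOST q \<sigma>) =
      (\<Sum>f\<in>band p \<inter> band q. dft_coeff (beta p) \<tau> f * cnj (dft_coeff (beta q) \<sigma> f))"
    unfolding DOST_eq_sum[abs_def] by (rule L2_inner_exp_freq_sums) auto
  also have "\<dots> = (if p = q \<and> \<tau> = \<sigma> then 1 else 0)"
  proof (cases "p = q")
    case True
    obtain a where "band p = {a..<a + int (beta p)}"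
      using band_is_interval by blast
    then show ?thesis
      using True assms by (simp add: dft_coeff_orthonormal)
  qed (simp add: band_disjoint)
  finally show ?thesis .
qed

definition trig_poly :: "(real \<Rightarrow> complex) \<Rightarrow> bool" where
  "trig_poly h \<longleftrightarrow> (\<exists>S c. finite S \<and> h = (\<lambda>t. \<Sum>n\<in>S. c n * exp_freq n t))"

lemma trig_poly_exp_freq: "trig_poly (\<lambda>t. a * exp_freq n t)"
  unfolding trig_poly_def by (intro exI[of _ "{n}"] exI[of _ "\<lambda>_. a"]) auto

lemma trig_poly_const: "trig_poly (\<lambda>t. a)"
  using trig_poly_exp_freq[of a 0] by simp

lemma trig_poly_add:
  assumes "trig_poly g" "trig_poly h"
  shows "trig_poly (\<lambda>t. g t + h t)"
proof -
  obtain S c where S: "finite S" "g = (\<lambda>t. \<Sum>n\<in>S. c n * exp_freq n t)"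
    using assms(1) trig_poly_def by auto
  obtain T d where T: "finite T" "h = (\<lambda>t. \<Sum>n\<in>T. d n * exp_freq n t)"
    using assms(2) trig_poly_def by auto
  have "g = (\<lambda>t. \<Sum>n\<in>S \<union> T. (if n \<in> S then c n else 0) * exp_freq n t)"
    "h = (\<lambda>t. \<Sum>n\<in>S \<union> T. (if n \<in> T then d n else 0) * exp_freq n t)"
    unfolding S T by (auto intro!: sum.mono_neutral_cong_left simp: S T)
  then show ?thesis
    unfolding trig_poly_def using S T
    by (intro exI[of _ "S \<union> T"] exI[of _ "\<lambda>n. (if n \<in> S then c n else 0) + (if n \<in> T then d n else 0)"])
      (simp add: distrib_right sum.distrib)
qed

lemma trig_poly_sum:
  "finite I \<Longrightarrow> (\<And>i. i \<in> I \<Longrightarrow> trig_poly (g i)) \<Longrightarrow> trig_poly (\<lambda>t. \<Sum>i\<in>I. g i t)"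
  by (induction I rule: finite_induct) (auto intro: trig_poly_add trig_poly_const[of 0, simplified])

lemma trig_poly_mult:
  assumes "trig_poly g" "trig_poly h"
  shows "trig_poly (\<lambda>t. g t * h t)"
proof -
  obtain S c where S: "finite S" "g = (\<lambda>t. \<Sum>n\<in>S. c n * exp_freq n t)"
    using assms(1) trig_poly_def by auto
  obtain T d where T: "finite T" "h = (\<lambda>t. \<Sum>n\<in>T. d n * exp_freq n t)"
    using assms(2) trig_poly_def by auto
  have "(\<lambda>t. g t * h t) = (\<lambda>t. \<Sum>n\<in>S. \<Sum>m\<in>T. c n * d m * exp_freq (n + m) t)"
    by (simp add: S T fun_eq_iff sum_product exp_freq_add mult_ac)
  moreover have "trig_poly (\<lambda>t. \<Sum>n\<in>S. \<Sum>m\<in>T. c n * d m * exp_freq (n + m) t)"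
    using S T by (intro trig_poly_sum trig_poly_exp_freq) auto
  ultimately show ?thesis
    by simp
qed

lemma continuous_on_trig_poly: "trig_poly h \<Longrightarrow> continuous_on S h"
  unfolding trig_poly_def by (auto intro!: continuous_intros)

lemma trig_poly_real_polynomial_function:
  fixes p :: "complex \<Rightarrow> real"
  assumes "real_polynomial_function p"
  shows "trig_poly (\<lambda>t. complex_of_real (p (exp_freq 1 t)))"
  using assms
proof (induction p rule: real_polynomial_function.induct)
  case (linear l)
  then interpret l: bounded_linear l .
  have lin: "complex_of_real (l z) = (z + cnj z) / 2 * of_real (l 1) + (z - cnj z) / (2 * \<i>) * of_real (l \<i>)"
    for z
  proof -
    have "z = Re z *\<^sub>R 1 + Im z *\<^sub>R \<i>"
      by (simp add: complex_eq_iff)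
    then have "l z = Re z * l 1 + Im z * l \<i>"
      by (metis l.add l.scale real_scaleR_def)
    then have "complex_of_real (l z) = of_real (Re z) * of_real (l 1) + of_real (Im z) * of_real (l \<i>)"
      by simp
    also have "complex_of_real (Re z) = (z + cnj z) / 2"
      by (simp add: complex_add_cnj)
    also have "complex_of_real (Im z) = (z - cnj z) / (2 * \<i>)"
      by (simp add: complex_diff_cnj complex_eq_iff)
    finally show ?thesis .
  qed
  have eq: "(\<lambda>t. complex_of_real (l (exp_freq 1 t))) =
      (\<lambda>t. (exp_freq 1 t + exp_freq (- 1) t) * (of_real (l 1) / 2) +
        (exp_freq 1 t - exp_freq (- 1) t) * (of_real (l \<i>) / (2 * \<i>)))"
  proof (rule ext)
    fix t
    show "complex_of_real (l (exp_freq 1 t)) =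
      (exp_freq 1 t + exp_freq (- 1) t) * (of_real (l 1) / 2) +
      (exp_freq 1 t - exp_freq (- 1) t) * (of_real (l \<i>) / (2 * \<i>))"
      unfolding lin[of "exp_freq 1 t"] cnj_exp_freq by (simp add: mult_ac)
  qed
  have sum: "trig_poly (\<lambda>t. exp_freq 1 t + exp_freq (- 1) t)"
    and diff: "trig_poly (\<lambda>t. exp_freq 1 t - exp_freq (- 1) t)"
    using trig_poly_add[OF trig_poly_exp_freq[of 1 1] trig_poly_exp_freq[of 1 "- 1"]]
      trig_poly_add[OF trig_poly_exp_freq[of 1 1] trig_poly_exp_freq[of "- 1" "- 1"]]
    by simp_all
  show ?case
    unfolding eq by (rule trig_poly_add[OF trig_poly_mult[OF sum] trig_poly_mult[OF diff]] trig_poly_const)+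
qed (simp_all add: trig_poly_const trig_poly_add trig_poly_mult)

lemma exp_freq_1_inj_on:
  assumes "t \<in> {0<..<1}" "s \<in> {0..1}" "exp_freq 1 t = exp_freq 1 s"
  shows "s = t"
proof -
  have "exp (2 * pi * \<i> * of_real (t - s)) = exp_freq 1 t / exp_freq 1 s"
    by (simp add: exp_freq_def exp_diff[symmetric] algebra_simps)
  also have "\<dots> = 1"
    using assms(3) by (simp add: exp_freq_def)
  finally obtain n :: int where "2 * pi * (t - s) = real_of_int (2 * n) * pi"
    unfolding exp_eq_1 by auto
  then have "(t - s) * (2 * pi) = real_of_int n * (2 * pi)"
    by (simp add: algebra_simps)
  then have "t - s = real_of_int n"
    by simp
  moreover have "\<bar>t - s\<bar> < 1"
    using assms by auto
  ultimately have "n = 0"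
    by linarith
  with \<open>t - s = real_of_int n\<close> show ?thesis
    by simp
qed

context
  fixes f :: "real \<Rightarrow> complex"
  assumes integrable_f: "integrable unit_interval_measure f"
    and orthogonal_exp_freq: "\<And>n. L2_inner f (exp_freq n) = 0"
begin

lemma integral_mult_trig_poly_eq_0:
  assumes "trig_poly h"
  shows "integral\<^sup>L unit_interval_measure (\<lambda>t. f t * h t) = 0"
proof -
  obtain S c where S: "finite S" "h = (\<lambda>t. \<Sum>n\<in>S. c n * exp_freq n t)"
    using assms trig_poly_def by auto
  have "integral\<^sup>L unit_interval_measure (\<lambda>t. f t * h t) =
      L2_inner f (\<lambda>t. \<Sum>n\<in>S. cnj (c n) * exp_freq (- n) t)"
    unfolding L2_inner_def
    by (intro Bochner_Integration.integral_cong refl) (simp add: S cnj_exp_freq sum_distrib_left)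
  also have "\<dots> = 0"
    by (simp add: L2_inner_sum_right integrable_f continuous_on_exp_freq orthogonal_exp_freq)
  finally show ?thesis .
qed

lemma integral_mult_circle_function_eq_0:
  fixes G :: "complex \<Rightarrow> real"
  assumes G: "continuous_on (sphere 0 1) G"
  shows "integral\<^sup>L unit_interval_measure (\<lambda>t. f t * of_real (G (exp_freq 1 t))) = 0"
proof -
  let ?M = unit_interval_measure
  let ?I = "integral\<^sup>L ?M (\<lambda>t. f t * of_real (G (exp_freq 1 t)))"
  define C where "C = integral\<^sup>L ?M (\<lambda>t. norm (f t))"
  have "C \<ge> 0"
    unfolding C_def by simp
  have cont_G: "continuous_on {0..1} (\<lambda>t. complex_of_real (G (exp_freq 1 t)))"
    by (intro continuous_on_of_real continuous_on_compose2[OF G] continuous_on_exp_freq) auto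
  have "norm ?I \<le> e" if "e > 0" for e
  proof -
    define \<delta> where "\<delta> = e / (C + 1)"
    have "\<delta> > 0" "\<delta> * C \<le> e"
      using \<open>C \<ge> 0\<close> \<open>e > 0\<close> by (simp_all add: \<delta>_def field_simps)
    obtain g where g: "polynomial_function g"
      and approx: "\<And>z. z \<in> sphere 0 1 \<Longrightarrow> \<bar>G z - g z\<bar> < \<delta>"
      using Stone_Weierstrass_polynomial_function[OF compact_sphere G \<open>\<delta> > 0\<close>] by auto
    have tp: "trig_poly (\<lambda>t. of_real (g (exp_freq 1 t)))"
      using g by (simp add: trig_poly_real_polynomial_function real_polynomial_function_eq)
    have int_G: "integrable ?M (\<lambda>t. f t * of_real (G (exp_freq 1 t)))"
      by (rule integrable_mult_continuous[OF integrable_f cont_G])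
    have int_g: "integrable ?M (\<lambda>t. f t * of_real (g (exp_freq 1 t)))"
      by (rule integrable_mult_continuous[OF integrable_f continuous_on_trig_poly[OF tp]])
    have "?I = ?I - integral\<^sup>L ?M (\<lambda>t. f t * of_real (g (exp_freq 1 t)))"
      using integral_mult_trig_poly_eq_0[OF tp] by simp
    also have "\<dots> = integral\<^sup>L ?M (\<lambda>t. f t * of_real (G (exp_freq 1 t) - g (exp_freq 1 t)))"
      using int_G int_g by (simp add: algebra_simps)
    finally have "norm ?I \<le> integral\<^sup>L ?M (\<lambda>t. norm (f t * of_real (G (exp_freq 1 t) - g (exp_freq 1 t))))"
      by (simp only: integral_norm_bound)
    also have "\<dots> \<le> integral\<^sup>L ?M (\<lambda>t. \<delta> * norm (f t))"
    proof (rule integral_mono)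
      show "integrable ?M (\<lambda>t. norm (f t * of_real (G (exp_freq 1 t) - g (exp_freq 1 t))))"
        using int_G int_g by (intro integrable_norm) (simp add: algebra_simps)
      show "integrable ?M (\<lambda>t. \<delta> * norm (f t))"
        using integrable_f by simp
      fix t
      have "\<bar>G (exp_freq 1 t) - g (exp_freq 1 t)\<bar> \<le> \<delta>"
        using approx[of "exp_freq 1 t"] by simp
      then show "norm (f t * of_real (G (exp_freq 1 t) - g (exp_freq 1 t))) \<le> \<delta> * norm (f t)"
        by (simp add: norm_mult mult.commute[of \<delta>] mult_left_mono del: of_real_diff)
    qed
    also have "\<dots> = \<delta> * C"
      by (simp add: C_def)
    finally show ?thesis
      using \<open>\<delta> * C \<le> e\<close> by linarith
  qed
  then show ?thesis
    using field_le_epsilon[of "norm ?I" 0] by auto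
qed


lemma integral_mult_indicator_eq_0:
  assumes ab: "0 < a" "a < b" "b < 1"
  shows "integral\<^sup>L unit_interval_measure (\<lambda>t. f t * indicator {a<..<b} t) = 0"
proof -
  let ?M = unit_interval_measure
  define K where "K = exp_freq 1 ` ({0..1} - {a<..<b})"
  have "closed K"
    unfolding K_def
    by (intro compact_imp_closed compact_continuous_image continuous_on_exp_freq compact_diff) auto
  have "0 \<in> {0..1} - {a<..<b}"
    using ab by simp
  then have "exp_freq 1 0 \<in> K"
    unfolding K_def by (rule imageI)
  then have "K \<noteq> {}"
    by auto
  text \<open>\<open>G k\<close> increases to the indicator of the open arc \<open>exp_freq 1 ` {a<..<b}\<close>, the complement of \<open>K\<close>.\<close>
  define G where "G k z = min 1 (real k * infdist z K)" for k :: nat and z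
  define s where "s k t = f t * of_real (G k (exp_freq 1 t))" for k t
  have cont_G: "continuous_on (sphere 0 1) (G k)" for k
    unfolding G_def by (intro continuous_intros)
  have int_s: "integrable ?M (s k)" for k
    unfolding s_def using integrable_f
    by (intro integrable_mult_continuous continuous_on_of_real continuous_on_compose2[OF cont_G]
        continuous_on_exp_freq) auto
  have lim: "(\<lambda>k. s k t) \<longlonglongrightarrow> f t * indicator {a<..<b} t" if "t \<in> {0..1}" for t
  proof (cases "t \<in> {a<..<b}")
    case True
    have "exp_freq 1 t \<notin> K"
    proof
      assume "exp_freq 1 t \<in> K"
      then obtain u where "u \<in> {0..1}" "u \<notin> {a<..<b}" "exp_freq 1 t = exp_freq 1 u"
        unfolding K_def by blast
      then show False
        using exp_freq_1_inj_on[of t u] True ab by auto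
    qed
    then have "infdist (exp_freq 1 t) K > 0"
      using \<open>closed K\<close> \<open>K \<noteq> {}\<close> by (simp add: infdist_pos_not_in_closed)
    then obtain N :: nat where N: "1 < real N * infdist (exp_freq 1 t) K"
      using reals_Archimedean3 by blast
    have "G k (exp_freq 1 t) = 1" if "N \<le> k" for k
      using N mult_right_mono[of "real N" "real k" "infdist (exp_freq 1 t) K"] that
      by (simp add: G_def infdist_nonneg)
    then have "\<forall>k\<ge>N. s k t = f t * indicator {a<..<b} t"
      using True by (simp add: s_def)
    then have "eventually (\<lambda>k. s k t = f t * indicator {a<..<b} t) sequentially"
      unfolding eventually_sequentially by blast
    then show ?thesis
      by (rule tendsto_eventually)
  next
    case False
    then have "t \<in> {0..1} - {a<..<b}"
      using that by simp
    then have "exp_freq 1 t \<in> K"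
      unfolding K_def by (rule imageI)
    with False show ?thesis
      by (simp add: s_def G_def)
  qed
  have "(\<lambda>k. integral\<^sup>L ?M (s k)) \<longlonglongrightarrow> integral\<^sup>L ?M (\<lambda>t. f t * indicator {a<..<b} t)"
  proof (rule integral_dominated_convergence[where w = "\<lambda>t. norm (f t)"])
    show s_meas: "s k \<in> borel_measurable ?M" for k
      using int_s by (rule borel_measurable_integrable)
    show "(\<lambda>t. f t * indicator {a<..<b} t) \<in> borel_measurable ?M"
      using s_meas lim by (rule borel_measurable_LIMSEQ_metric) simp
    show "integrable ?M (\<lambda>t. norm (f t))"
      using integrable_f by simp
    show "AE t in ?M. (\<lambda>k. s k t) \<longlonglongrightarrow> f t * indicator {a<..<b} t"
      using lim by (intro AE_I2) simp
    have "\<bar>G k z\<bar> \<le> 1" for k z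
      by (simp add: G_def infdist_nonneg)
    then show "AE t in ?M. norm (s k t) \<le> norm (f t)" for k
      by (intro AE_I2) (simp add: s_def norm_mult mult_left_le)
  qed
  moreover have "integral\<^sup>L ?M (s k) = 0" for k
    unfolding s_def by (rule integral_mult_circle_function_eq_0[OF cont_G])
  ultimately show ?thesis
    by (simp add: LIMSEQ_const_iff)
qed

end

lemma negligible_nonzero_if_interval_integrals_eq_0:
  fixes F :: "real \<Rightarrow> 'a::euclidean_space"
  assumes F: "\<And>c d. F integrable_on {c..d}"
    and zero: "\<And>a b. u < a \<Longrightarrow> a < b \<Longrightarrow> b < v \<Longrightarrow> integral {a..b} F = 0"
  obtains N where "negligible N" "\<And>x. x \<in> {u<..<v} - N \<Longrightarrow> F x = 0"
proof -
  obtain N where "negligible N"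
    and lebesgue_point: "\<And>x e. x \<notin> N \<Longrightarrow> 0 < e \<Longrightarrow>
       \<exists>d>0. \<forall>h. 0 < h \<and> h < d \<longrightarrow>
         norm (integral (cbox x (x + h *\<^sub>R One)) F /\<^sub>R h ^ DIM(real) - F x) < e"
    using integrable_ccontinuous_explicit[of F] F by auto
  have "F x = 0" if x: "x \<in> {u<..<v} - N" for x
  proof (rule ccontr)
    assume "F x \<noteq> 0"
    then obtain d where "d > 0" and d: "\<And>h. 0 < h \<Longrightarrow> h < d \<Longrightarrow>
         norm (integral (cbox x (x + h *\<^sub>R One)) F /\<^sub>R h ^ DIM(real) - F x) < norm (F x)"
      using lebesgue_point[of x "norm (F x)"] x by auto
    define h where "h = min (d / 2) ((v - x) / 2)"
    have "0 < h" "h < d"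
      using \<open>d > 0\<close> x by (simp_all add: h_def)
    have "h \<le> (v - x) / 2"
      unfolding h_def by (rule min.cobounded2)
    then have "x + h < v"
      using x by simp
    then have "integral (cbox x (x + h *\<^sub>R One)) F = 0"
      using zero[of x "x + h"] x \<open>0 < h\<close> by simp
    then show False
      using d[OF \<open>0 < h\<close> \<open>h < d\<close>] by simp
  qed
  with \<open>negligible N\<close> show thesis
    by (rule that)
qed

lemma AE_eq_0_if_interval_integrals_eq_0:
  fixes f :: "real \<Rightarrow> complex"
  assumes f: "integrable (lebesgue_on {0..1}) f"
    and zero: "\<And>a b. 0 < a \<Longrightarrow> a < b \<Longrightarrow> b < 1 \<Longrightarrow>
      integral\<^sup>L (lebesgue_on {0..1}) (\<lambda>t. f t * indicator {a<..<b} t) = 0"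
  shows "AE t in lebesgue_on {0..1}. f t = 0"
proof -
  define F where "F x = (if x \<in> {0..1} then f x else 0)" for x
  have f_set: "set_integrable lebesgue {0..1} f"
    using f by (simp add: set_integrable_def integrable_restrict_space)
  then have "f integrable_on {0..1}"
    by (rule set_lebesgue_integral_eq_integral(1))
  then have "F integrable_on UNIV"
    unfolding F_def by (rule iffD2[OF integrable_restrict_UNIV])
  then have int_F: "F integrable_on {c..d}" for c d
    by (rule integrable_on_subinterval) auto
  have zero_F: "integral {a..b} F = 0" if ab: "0 < a" "a < b" "b < 1" for a b
  proof -
    have "set_integrable lebesgue {a<..<b} f"
      by (rule set_integrable_subset[OF f_set]) (use ab in auto)
    have "integral {a..b} F = integral {a<..<b} f"
      unfolding integral_open_interval_real[symmetric]
      by (rule Henstock_Kurzweil_Integration.integral_cong) (use ab in \<open>auto simp: F_def\<close>)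
    also have "\<dots> = (LINT x:{a<..<b}|lebesgue. f x)"
      by (rule set_lebesgue_integral_eq_integral(2)[symmetric]) fact
    also have "\<dots> = integral\<^sup>L lebesgue (\<lambda>x. indicator {0..1} x *\<^sub>R (f x * indicator {a<..<b} x))"
      unfolding set_lebesgue_integral_def
      by (rule Bochner_Integration.integral_cong) (use ab in \<open>auto split: split_indicator\<close>)
    also have "\<dots> = integral\<^sup>L (lebesgue_on {0..1}) (\<lambda>x. f x * indicator {a<..<b} x)"
      by (rule integral_restrict_space[symmetric]) auto
    finally show ?thesis
      using zero[OF ab] by simp
  qed
  obtain N where N: "negligible N" "\<And>x. x \<in> {0<..<1} - N \<Longrightarrow> F x = 0"
    using negligible_nonzero_if_interval_integrals_eq_0[OF int_F zero_F] by blast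
  have "negligible (N \<union> {0, 1})"
    using N(1) by auto
  moreover have "{t. \<not> (t \<in> {0..1} \<longrightarrow> f t = 0)} \<subseteq> N \<union> {0, 1}"
  proof
    fix t
    assume "t \<in> {t. \<not> (t \<in> {0..1} \<longrightarrow> f t = 0)}"
    then have "t \<in> {0..1}" "F t \<noteq> 0"
      by (simp_all add: F_def)
    then show "t \<in> N \<union> {0, 1}"
      using N(2)[of t] by fastforce
  qed
  ultimately have "AE t in lebesgue. t \<in> {0..1} \<longrightarrow> f t = 0"
    unfolding eventually_ae_filter_negligible by blast
  then show ?thesis
    using AE_restrict_space_iff[of "{0..1}" lebesgue "\<lambda>t. f t = 0"] by simp
qed

lemma AE_eq_0_if_orthogonal_exp_freq:
  assumes "f \<in> L2_01" "\<And>n. L2_inner f (exp_freq n) = 0"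
  shows "AE t in unit_interval_measure. f t = 0"
  using integrable_if_L2_01[OF assms(1)] assms(2)
  by (intro AE_eq_0_if_interval_integrals_eq_0 integral_mult_indicator_eq_0)

lemma L2_inner_exp_freq_eq_0_if_orthogonal_DOST:
  assumes f: "f \<in> L2_01" and orthogonal: "\<And>p \<tau>. \<tau> < beta p \<Longrightarrow> L2_inner f (DOST p \<tau>) = 0"
  shows "L2_inner f (exp_freq n) = 0"
proof -
  define p where "p = sgn n * bitlen \<bar>n\<bar>"
  have "exp_freq n = (\<lambda>t. \<Sum>\<tau><beta p. cnj (dft_coeff (beta p) \<tau> n) * DOST p \<tau> t)"
    using exp_freq_eq_sum_DOST[OF mem_band_signed_bitlen] by (simp add: p_def fun_eq_iff)
  then show ?thesis
    using orthogonal integrable_if_L2_01[OF f] by (simp add: L2_inner_sum_right continuous_on_DOST)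
qed

theorem theorem3p1:
  shows "L2_orthonormal_basis (\<lambda>(p, \<tau>). DOST p \<tau>) DOST_index"
  unfolding L2_orthonormal_basis_def
proof (intro conjI ballI impI)
  fix i
  show "(case i of (p, \<tau>) \<Rightarrow> DOST p \<tau>) \<in> L2_01"
    by (cases i) (simp add: L2_01_if_continuous continuous_on_DOST)
next
  fix i j
  assume "i \<in> DOST_index" "j \<in> DOST_index"
  then show "L2_inner (case i of (p, \<tau>) \<Rightarrow> DOST p \<tau>) (case j of (p, \<tau>) \<Rightarrow> DOST p \<tau>) =
      (if i = j then 1 else 0)"
    by (cases i, cases j) (simp add: DOST_index_def L2_inner_DOST)
next
  fix f
  assume f: "f \<in> L2_01"
    and orthogonal: "\<forall>i\<in>DOST_index. L2_inner f (case i of (p, \<tau>) \<Rightarrow> DOST p \<tau>) = 0"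
  show "AE t in unit_interval_measure. f t = 0"
    using orthogonal
    by (intro AE_eq_0_if_orthogonal_exp_freq[OF f] L2_inner_exp_freq_eq_0_if_orthogonal_DOST[OF f])
      (simp add: DOST_index_def)
qed

end
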